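(* Let $x_0<\dots<x_n$ and $\hat x_0<\dots<\hat x_n$ be real numbers with $\hat x_0=x_0$, $\hat x_n=x_n$, let $z_k=z_k(\mathbf{x},\hat{\mathbf{x}})$, $\hat c_k:=(\hat x_{k-1}+\hat x_k)/2$, and for $1\le k\le n$, $0\le j\le n$ let $a_{k,j}:=(z_j-P_{\mathbf{z}}(\hat c_k))\,\ell_j(\hat c_k)$. Let $L\ge0$ and let $\mathbf{y}\in\mathbb{R}^{n+1}$ satisfy $|y_j-y_{j-1}|\le L(\hat x_j-\hat x_{j-1})$ for $1\le j\le n$. Then for each $1\le k\le n$, \[ |E(\hat c_k;\mathbf{y},\mathbf{z})|\le L\sum_{i=1}^n(\hat x_i-\hat x_{i-1})\Bigl|\sum_{j=i}^n a_{k,j}\Bigr|. \]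
   Context: $\lambda_k(\mathbf{x}):=1/\prod_{j\neq k}(x_k-x_j)$; $z_k(\mathbf{x},\hat{\mathbf{x}}):=(\lambda_k(\mathbf{x})-\lambda_k(\hat{\mathbf{x}}))/\lambda_k(\hat{\mathbf{x}})$. $\ell_j$ is the $j$-th Lagrange polynomial for the nodes $\hat{\mathbf{x}}$. For $\mathbf{v}\in\mathbb{R}^{n+1}$, $P_{\mathbf{v}}$ is the polynomial of degree $\le n$ with $P_{\mathbf{v}}(\hat x_k)=v_k$; $E(t;\mathbf{y},\mathbf{z}):=P_{\mathbf{y}\mathbf{z}}(t)-P_{\mathbf{y}}(t)P_{\mathbf{z}}(t)$ with $(\mathbf{yz})_k=y_kz_k$. *)

theory Defs
  imports Complex_Main
begin

text \<open>Nodes are functions nat \<Rightarrow> real, only indices 0..n are relevant.\<close>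

definition lam :: "nat \<Rightarrow> (nat \<Rightarrow> real) \<Rightarrow> nat \<Rightarrow> real" where
  "lam n x k = 1 / (\<Prod>j\<in>{0..n} - {k}. (x k - x j))"

definition zz :: "nat \<Rightarrow> (nat \<Rightarrow> real) \<Rightarrow> (nat \<Rightarrow> real) \<Rightarrow> nat \<Rightarrow> real" where
  "zz n x xh k = (lam n x k - lam n xh k) / lam n xh k"

definition lagr :: "nat \<Rightarrow> (nat \<Rightarrow> real) \<Rightarrow> nat \<Rightarrow> real \<Rightarrow> real" where
  "lagr n xh j t = (\<Prod>i\<in>{0..n} - {j}. (t - xh i) / (xh j - xh i))"

definition Pint :: "nat \<Rightarrow> (nat \<Rightarrow> real) \<Rightarrow> (nat \<Rightarrow> real) \<Rightarrow> real \<Rightarrow> real" where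
  "Pint n xh v t = (\<Sum>j=0..n. v j * lagr n xh j t)"

definition Eint :: "nat \<Rightarrow> (nat \<Rightarrow> real) \<Rightarrow> real \<Rightarrow> (nat \<Rightarrow> real) \<Rightarrow> (nat \<Rightarrow> real) \<Rightarrow> real" where
  "Eint n xh t y z = Pint n xh (\<lambda>k. y k * z k) t - Pint n xh y t * Pint n xh z t"

end

theory Submission imports Defs "HOL-Computational_Algebra.Polynomial" begin

text \<open>
  Writing \<open>P\<^sub>v(t) = \<Sum>\<^sub>j v\<^sub>j \<ell>\<^sub>j(t)\<close> gives \<open>E(t; y, z) = \<Sum>\<^sub>j y\<^sub>j a\<^sub>j\<close> with
  \<open>a\<^sub>j = (z\<^sub>j - P\<^sub>z(t)) \<ell>\<^sub>j(t)\<close>, and these weights sum to zero because the Lagrange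
  polynomials form a partition of unity. Abel summation then expresses \<open>E\<close> through the
  increments \<open>y\<^sub>i - y\<^sub>i\<^sub>-\<^sub>1\<close> and the tail sums of the weights, and the Lipschitz bound on the
  increments gives the estimate. Nothing is used about \<open>z\<close>.
\<close>

lemma sum_mult_Abel:
  fixes y a :: "nat \<Rightarrow> 'a::comm_ring_1"
  shows "(\<Sum>j=0..m. y j * a j)
           = y 0 * (\<Sum>j=0..m. a j) + (\<Sum>i=1..m. (y i - y (i - 1)) * (\<Sum>j=i..m. a j))"
proof (induction m)
  case 0
  show ?case by simp
next
  case (Suc m)
  have telescope: "(\<Sum>i=1..l. y i - y (i - 1)) = y l - y 0" for l
    by (induction l) auto
  have "(\<Sum>i=1..Suc m. (y i - y (i - 1)) * (\<Sum>j=i..Suc m. a j))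
      = (\<Sum>i=1..Suc m. (y i - y (i - 1)) * (\<Sum>j=i..m. a j) + (y i - y (i - 1)) * a (Suc m))"
    by (intro sum.cong) (auto simp: algebra_simps)
  also have "\<dots> = (\<Sum>i=1..Suc m. (y i - y (i - 1)) * (\<Sum>j=i..m. a j))
                   + (\<Sum>i=1..Suc m. y i - y (i - 1)) * a (Suc m)"
    by (simp only: sum.distrib sum_distrib_right)
  also have "\<dots> = (\<Sum>i=1..m. (y i - y (i - 1)) * (\<Sum>j=i..m. a j))
                   + (y (Suc m) - y 0) * a (Suc m)"
    unfolding telescope by simp
  finally show ?case
    using Suc.IH by (simp add: algebra_simps)
qed

lemma inj_on_atLeastAtMost_if_Suc_less:
  fixes f :: "nat \<Rightarrow> 'a::linorder"
  assumes "\<forall>i<n. f i < f (Suc i)"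
  shows "inj_on f {0..n}"
proof (rule strict_mono_on_imp_inj_on, rule strict_mono_onI)
  fix i j assume "i \<in> {0..n}" "j \<in> {0..n}" "i < j"
  then show "f i < f j"
    using assms by (induction j) (auto simp: less_Suc_eq intro: less_trans)
qed

definition lagr_poly :: "nat \<Rightarrow> (nat \<Rightarrow> real) \<Rightarrow> nat \<Rightarrow> real poly" where
  "lagr_poly n xh j = (\<Prod>i\<in>{0..n} - {j}. smult (1 / (xh j - xh i)) [:- xh i, 1:])"

lemma poly_lagr_poly: "poly (lagr_poly n xh j) t = lagr n xh j t"
  unfolding lagr_poly_def lagr_def poly_prod by (intro prod.cong) (auto simp: diff_divide_distrib)

lemma degree_lagr_poly: "j \<le> n \<Longrightarrow> degree (lagr_poly n xh j) \<le> n"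
proof -
  assume "j \<le> n"
  have "degree (lagr_poly n xh j)
      \<le> sum (degree \<circ> (\<lambda>i. smult (1 / (xh j - xh i)) [:- xh i, 1:])) ({0..n} - {j})"
    unfolding lagr_poly_def by (rule degree_prod_sum_le) auto
  also have "\<dots> \<le> (\<Sum>i\<in>{0..n} - {j}. 1)"
    by (intro sum_mono) auto
  also have "\<dots> = n" using \<open>j \<le> n\<close> by simp
  finally show ?thesis .
qed

lemma lagr_at_node:
  assumes "inj_on xh {0..n}" "j \<le> n" "m \<le> n"
  shows "lagr n xh j (xh m) = (if m = j then 1 else 0)"
proof (cases "m = j")
  case True
  then have "lagr n xh j (xh m) = (\<Prod>i\<in>{0..n} - {j}. 1)"
    unfolding lagr_def using assms by (intro prod.cong) (auto simp: inj_on_def)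
  then show ?thesis using True by simp
next
  case False
  have "lagr n xh j (xh m) = 0"
    unfolding lagr_def by (rule prod_zero) (use False \<open>m \<le> n\<close> in auto)
  then show ?thesis using False by simp
qed

text \<open>Both sides are polynomials of degree at most \<open>n\<close> agreeing at the \<open>n + 1\<close> nodes.\<close>
lemma sum_lagr_eq_1:
  assumes inj: "inj_on xh {0..n}"
  shows "(\<Sum>j=0..n. lagr n xh j t) = 1"
proof -
  have card_nodes: "card (xh ` {0..n}) = Suc n"
    using inj by (simp add: card_image)
  have "(\<Sum>j=0..n. lagr_poly n xh j) = 1"
  proof (rule poly_eqI_degree[where A = "xh ` {0..n}"])
    fix u assume "u \<in> xh ` {0..n}"
    then obtain m where m: "m \<le> n" "u = xh m" by auto
    then have "poly (\<Sum>j=0..n. lagr_poly n xh j) u = (\<Sum>j=0..n. if m = j then 1 else 0)"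
      unfolding poly_sum poly_lagr_poly using inj by (intro sum.cong) (auto simp: lagr_at_node)
    then show "poly (\<Sum>j=0..n. lagr_poly n xh j) u = poly 1 u"
      using m by simp
  next
    show "degree (\<Sum>j=0..n. lagr_poly n xh j) < card (xh ` {0..n})"
      unfolding card_nodes by (rule le_imp_less_Suc, rule degree_sum_le) (auto intro: degree_lagr_poly)
    show "degree (1::real poly) < card (xh ` {0..n})"
      unfolding card_nodes by simp
  qed
  then have "poly (\<Sum>j=0..n. lagr_poly n xh j) t = 1"
    by simp
  then show ?thesis
    unfolding poly_sum poly_lagr_poly .
qed

lemma Eint_eq_sum_weights:
  "Eint n xh t y z = (\<Sum>j=0..n. y j * ((z j - Pint n xh z t) * lagr n xh j t))"
proof -
  have "Eint n xh t y z = (\<Sum>j=0..n. y j * z j * lagr n xh j t) - (\<Sum>j=0..n. y j * lagr n xh j t * Pint n xh z t)"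
    unfolding Eint_def by (simp add: Pint_def sum_distrib_right)
  also have "\<dots> = (\<Sum>j=0..n. y j * ((z j - Pint n xh z t) * lagr n xh j t))"
    unfolding sum_subtractf[symmetric] by (intro sum.cong) (auto simp: algebra_simps)
  finally show ?thesis .
qed
lemma sum_weights_eq_0:
  assumes "inj_on xh {0..n}"
  shows "(\<Sum>j=0..n. (z j - Pint n xh z t) * lagr n xh j t) = 0"
proof -
  have "(\<Sum>j=0..n. (z j - Pint n xh z t) * lagr n xh j t)
      = Pint n xh z t - Pint n xh z t * (\<Sum>j=0..n. lagr n xh j t)"
    unfolding Pint_def by (simp add: left_diff_distrib sum_subtractf sum_distrib_left)
  then show ?thesis
    using sum_lagr_eq_1[OF assms] by simp
qed

lemma abs_sum_mult_le_if_sum_eq_0: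
  fixes y a h :: "nat \<Rightarrow> real"
  assumes sum_a: "(\<Sum>j=0..n. a j) = 0"
    and lip: "\<forall>j\<in>{1..n}. \<bar>y j - y (j - 1)\<bar> \<le> L * h j"
  shows "\<bar>\<Sum>j=0..n. y j * a j\<bar> \<le> L * (\<Sum>i=1..n. h i * \<bar>\<Sum>j=i..n. a j\<bar>)"
proof -
  have "\<bar>\<Sum>j=0..n. y j * a j\<bar> = \<bar>\<Sum>i=1..n. (y i - y (i - 1)) * (\<Sum>j=i..n. a j)\<bar>"
    by (simp add: sum_mult_Abel sum_a)
  also have "\<dots> \<le> (\<Sum>i=1..n. \<bar>y i - y (i - 1)\<bar> * \<bar>\<Sum>j=i..n. a j\<bar>)"
    unfolding abs_mult[symmetric] by (rule sum_abs)
  also have "\<dots> \<le> (\<Sum>i=1..n. L * h i * \<bar>\<Sum>j=i..n. a j\<bar>)"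
    using lip by (intro sum_mono mult_right_mono) auto
  finally show ?thesis
    by (simp add: sum_distrib_left mult.assoc)
qed

theorem lemma4:
  fixes n :: nat and x xh y :: "nat \<Rightarrow> real" and L :: real and k :: nat
  assumes x_incr: "\<forall>i<n. x i < x (Suc i)"
    and xh_incr: "\<forall>i<n. xh i < xh (Suc i)"
    and first: "xh 0 = x 0" and last: "xh n = x n"
    and L: "L \<ge> 0"
    and lip: "\<forall>j\<in>{1..n}. \<bar>y j - y (j - 1)\<bar> \<le> L * (xh j - xh (j - 1))"
    and k: "1 \<le> k" "k \<le> n"
  shows "let z = zz n x xh;
             c = (xh (k - 1) + xh k) / 2;
             a = (\<lambda>j. (z j - Pint n xh z c) * lagr n xh j c)
         in \<bar>Eint n xh c y z\<bar> \<le> L * (\<Sum>i=1..n. (xh i - xh (i - 1)) * \<bar>\<Sum>j=i..n. a j\<bar>)"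
proof -
  define z where "z = zz n x xh"
  define c where "c = (xh (k - 1) + xh k) / 2"
  have "inj_on xh {0..n}"
    using xh_incr by (rule inj_on_atLeastAtMost_if_Suc_less)
  then have "\<bar>Eint n xh c y z\<bar>
      \<le> L * (\<Sum>i=1..n. (xh i - xh (i - 1)) * \<bar>\<Sum>j=i..n. (z j - Pint n xh z c) * lagr n xh j c\<bar>)"
    unfolding Eint_eq_sum_weights
    by (intro abs_sum_mult_le_if_sum_eq_0 sum_weights_eq_0 lip)
  then show ?thesis
    unfolding Let_def z_def c_def .
qed

end
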